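(* Let $\mathbf A=(A,\wedge,\vee,\cdot,\backslash,/,1)$ be an $r\ell u$-groupoid and let $(A^\star,\le^\star,\cdot^\star,1^\star)$ be constructed from it as described in the context. Then: (1) $(A^\star,\le^\star,\cdot^\star,1^\star)$ is a lattice-ordered unital groupoid, i.e. $\le^\star$ is a lattice order, $1^\star$ is a two-sided unit for $\cdot^\star$, and $x\le^\star y$ implies $x\cdot^\star z\le^\star y\cdot^\star z$ and $z\cdot^\star x\le^\star z\cdot^\star y$; (2) for all $x,y,z\in A^\star$: $x\cdot^\star y\le^\star z$ iff ${\sim}z\cdot^\star x\le^\star{\sim}y$ iff $y\cdot^\star{\sim}z\le^\star{\sim}x$.
   Context: An $r\ell u$-groupoid is an algebra $(A,\wedge,\vee,\cdot,\backslash,/,1)$ with $(A,\wedge,\vee)$ a lattice (order $\le$), $(A,\cdot,1)$ a unital groupoid (not necessarily associative), and $x\cdot y\le z\iff y\le x\backslash z\iff x\le z/y$. Construction: $A^\star=A\cup A^\sim\cup\{\top,\bot\}$, where $A^\sim=\{x^\sim\mid x\in A\}$ is a disjoint bijective copy of $A$ and $\top,\bot$ are two new elements. Multiplication: for $x,y\in A$ and $z\in A^\star$: $x\cdot^\star y=x\cdot y$; $x\cdot^\star y^\sim=(y/x)^\sim$; $x^\sim\cdot^\star y=(y\backslash x)^\sim$; $x^\sim\cdot^\star y^\sim=\top$; $z\cdot^\star\top=\top\cdot^\star z=\top$ if $z\neq\bot$ and $=\bot$ if $z=\bot$; $z\cdot^\star\bot=\bot\cdot^\star z=\bot$. Order $\le^\star$: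 extends $\le$ on $A$; $\bot<^\star x<^\star y^\sim<^\star\top$ for all $x,y\in A$; $x^\sim\le^\star y^\sim$ iff $y\le x$. $1^\star=1$. The map ${\sim}$ on $A^\star$: ${\sim}x=x^\sim$ for $x\in A$; ${\sim}(y^\sim)=y$ for $y\in A$; ${\sim}\top=\bot$; ${\sim}\bot=\top$. *)

theory Defs
  imports Main
begin

text \<open>An rlu-groupoid: the lattice (A, inf, sup) is the type class lattice on 'a
(order \<le>); mult is a unital (not necessarily associative) groupoid with unit one,
ldiv x z = x \ z and rdiv z y = z / y are the residuals.\<close>

definition rlu_groupoid ::
  "('a::lattice \<Rightarrow> 'a \<Rightarrow> 'a) \<Rightarrow> ('a \<Rightarrow> 'a \<Rightarrow> 'a) \<Rightarrow> ('a \<Rightarrow> 'a \<Rightarrow> 'a) \<Rightarrow> 'a \<Rightarrow> bool" where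
  "rlu_groupoid mult ldiv rdiv one \<longleftrightarrow>
     (\<forall>x. mult one x = x \<and> mult x one = x) \<and>
     (\<forall>x y z. (mult x y \<le> z \<longleftrightarrow> y \<le> ldiv x z) \<and> (mult x y \<le> z \<longleftrightarrow> x \<le> rdiv z y))"

text \<open>The carrier A* = A \<union> A~ \<union> {top, bot}.\<close>
datatype 'a star = Elem 'a | Tld 'a | STop | SBot

fun star_le :: "'a::lattice star \<Rightarrow> 'a star \<Rightarrow> bool" where
  "star_le SBot _ = True"
| "star_le _ STop = True"
| "star_le (Elem x) (Elem y) = (x \<le> y)"
| "star_le (Elem x) (Tld y) = True"
| "star_le (Tld x) (Tld y) = (y \<le> x)"
| "star_le _ _ = False"

fun star_mult :: "('a \<Rightarrow> 'a \<Rightarrow> 'a) \<Rightarrow> ('a \<Rightarrow> 'a \<Rightarrow> 'a) \<Rightarrow> ('a \<Rightarrow> 'a \<Rightarrow> 'a)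
                  \<Rightarrow> 'a star \<Rightarrow> 'a star \<Rightarrow> 'a star" where
  "star_mult mult ldiv rdiv SBot _ = SBot"
| "star_mult mult ldiv rdiv _ SBot = SBot"
| "star_mult mult ldiv rdiv STop _ = STop"
| "star_mult mult ldiv rdiv _ STop = STop"
| "star_mult mult ldiv rdiv (Elem x) (Elem y) = Elem (mult x y)"
| "star_mult mult ldiv rdiv (Elem x) (Tld y) = Tld (rdiv y x)"
| "star_mult mult ldiv rdiv (Tld x) (Elem y) = Tld (ldiv y x)"
| "star_mult mult ldiv rdiv (Tld x) (Tld y) = STop"

definition star_one :: "'a \<Rightarrow> 'a star" where
  "star_one one = Elem one"

fun star_neg :: "'a star \<Rightarrow> 'a star" where
  "star_neg (Elem x) = Tld x"
| "star_neg (Tld y) = Elem y"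
| "star_neg STop = SBot"
| "star_neg SBot = STop"

definition is_lattice_order :: "('b \<Rightarrow> 'b \<Rightarrow> bool) \<Rightarrow> bool" where
  "is_lattice_order le \<longleftrightarrow>
     (\<forall>x. le x x) \<and> (\<forall>x y. le x y \<and> le y x \<longrightarrow> x = y) \<and>
     (\<forall>x y z. le x y \<and> le y z \<longrightarrow> le x z) \<and>
     (\<forall>x y. \<exists>s. le x s \<and> le y s \<and> (\<forall>u. le x u \<and> le y u \<longrightarrow> le s u)) \<and>
     (\<forall>x y. \<exists>i. le i x \<and> le i y \<and> (\<forall>u. le u x \<and> le u y \<longrightarrow> le u i))"

end

theory Submission
  imports Defs
begin

text \<open>On the new elements everything reduces to the residuation laws of \<open>A\<close>:
the order on \<open>A\<^sup>~\<close> is the dual of that on \<open>A\<close>, so multiplying by an element of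
\<open>A\<^sup>~\<close> is monotone because the divisions are antitone in the denominator, and
each instance of the cyclic residuation law for \<open>A\<^sup>\<star>\<close> becomes either a
residuation law of \<open>A\<close>, the equivalence \<open>a \<le> b\<setminus>c \<longleftrightarrow> b \<le> c/a\<close>, or a triviality
involving \<open>\<top>\<close> and \<open>\<bottom>\<close>.\<close>

lemma star_le_refl: "star_le x (x::'a::lattice star)"
  by (cases x) auto

lemma star_le_antisym: "star_le x y \<Longrightarrow> star_le y x \<Longrightarrow> x = (y::'a::lattice star)"
  by (cases x; cases y) auto

lemma star_le_trans: "star_le x y \<Longrightarrow> star_le y z \<Longrightarrow> star_le x (z::'a::lattice star)"
  by (cases x; cases y; cases z) auto

fun star_sup :: "'a::lattice star \<Rightarrow> 'a star \<Rightarrow> 'a star" where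
  "star_sup SBot y = y"
| "star_sup x SBot = x"
| "star_sup STop _ = STop"
| "star_sup _ STop = STop"
| "star_sup (Elem a) (Elem b) = Elem (sup a b)"
| "star_sup (Elem a) (Tld b) = Tld b"
| "star_sup (Tld a) (Elem b) = Tld a"
| "star_sup (Tld a) (Tld b) = Tld (inf a b)"

fun star_inf :: "'a::lattice star \<Rightarrow> 'a star \<Rightarrow> 'a star" where
  "star_inf STop y = y"
| "star_inf x STop = x"
| "star_inf SBot _ = SBot"
| "star_inf _ SBot = SBot"
| "star_inf (Elem a) (Elem b) = Elem (inf a b)"
| "star_inf (Elem a) (Tld b) = Elem a"
| "star_inf (Tld a) (Elem b) = Elem b"
| "star_inf (Tld a) (Tld b) = Tld (sup a b)"

lemma star_sup_least_upper_bound: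
  "star_le x (star_sup x y) \<and> star_le y (star_sup x y) \<and>
   (star_le x u \<and> star_le y u \<longrightarrow> star_le (star_sup x y) u)"
  by (cases x; cases y; cases u) auto

lemma star_inf_greatest_lower_bound:
  "star_le (star_inf x y) x \<and> star_le (star_inf x y) y \<and>
   (star_le u x \<and> star_le u y \<longrightarrow> star_le u (star_inf x y))"
  by (cases x; cases y; cases u) auto

lemma is_lattice_order_star_le: "is_lattice_order (star_le :: 'a::lattice star \<Rightarrow> _)"
  unfolding is_lattice_order_def
proof (intro conjI allI impI)
  show "\<exists>s. star_le x s \<and> star_le y s \<and> (\<forall>u. star_le x u \<and> star_le y u \<longrightarrow> star_le s u)"
    for x y :: "'a star"
    using star_sup_least_upper_bound by blast
  show "\<exists>i. star_le i x \<and> star_le i y \<and> (\<forall>u. star_le u x \<and> star_le u y \<longrightarrow> star_le u i)"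
    for x y :: "'a star"
    using star_inf_greatest_lower_bound by blast
qed (auto intro: star_le_refl star_le_antisym star_le_trans)

locale rlu =
  fixes mult ldiv rdiv :: "'a::lattice \<Rightarrow> 'a \<Rightarrow> 'a" and one :: 'a
  assumes rlu_groupoid: "rlu_groupoid mult ldiv rdiv one"
begin

abbreviation smult :: "'a star \<Rightarrow> 'a star \<Rightarrow> 'a star" where
  "smult \<equiv> star_mult mult ldiv rdiv"

lemma mult_one_left [simp]: "mult one x = x"
  and mult_one_right [simp]: "mult x one = x"
  and mult_le_iff_le_ldiv: "mult x y \<le> z \<longleftrightarrow> y \<le> ldiv x z"
  and mult_le_iff_le_rdiv: "mult x y \<le> z \<longleftrightarrow> x \<le> rdiv z y"
  using rlu_groupoid unfolding rlu_groupoid_def by auto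

lemma le_ldiv_iff_le_rdiv: "a \<le> ldiv b c \<longleftrightarrow> b \<le> rdiv c a"
  using mult_le_iff_le_ldiv mult_le_iff_le_rdiv by blast

lemma ldiv_one [simp]: "ldiv one x = x"
  by (metis mult_le_iff_le_ldiv mult_one_left order_antisym order_refl)

lemma rdiv_one [simp]: "rdiv x one = x"
  by (metis mult_le_iff_le_rdiv mult_one_right order_antisym order_refl)

lemma mult_mono_left: "a \<le> b \<Longrightarrow> mult a c \<le> mult b c"
  by (metis mult_le_iff_le_rdiv order_refl order_trans)

lemma mult_mono_right: "a \<le> b \<Longrightarrow> mult c a \<le> mult c b"
  by (metis mult_le_iff_le_ldiv order_refl order_trans)

lemma ldiv_mono: "a \<le> b \<Longrightarrow> ldiv c a \<le> ldiv c b"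
  by (metis mult_le_iff_le_ldiv order_refl order_trans)

lemma ldiv_antimono: "a \<le> b \<Longrightarrow> ldiv b c \<le> ldiv a c"
  by (metis mult_le_iff_le_ldiv mult_mono_left order_refl order_trans)

lemma rdiv_mono: "a \<le> b \<Longrightarrow> rdiv a c \<le> rdiv b c"
  by (metis mult_le_iff_le_rdiv order_refl order_trans)

lemma rdiv_antimono: "a \<le> b \<Longrightarrow> rdiv c b \<le> rdiv c a"
  by (metis mult_le_iff_le_rdiv mult_mono_right order_refl order_trans)

lemma star_mult_one_left: "smult (star_one one) x = x"
  and star_mult_one_right: "smult x (star_one one) = x"
  by (cases x; simp add: star_one_def)+

lemma star_mult_mono_left: "star_le x y \<Longrightarrow> star_le (smult x z) (smult y z)"
  by (cases x; cases y; cases z) (auto simp: mult_mono_left ldiv_mono rdiv_antimono)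

lemma star_mult_mono_right: "star_le x y \<Longrightarrow> star_le (smult z x) (smult z y)"
  by (cases x; cases y; cases z) (auto simp: mult_mono_right ldiv_antimono rdiv_mono)

lemma star_mult_le_iff_neg_left:
  "star_le (smult x y) z \<longleftrightarrow> star_le (smult (star_neg z) x) (star_neg y)"
  by (cases x; cases y; cases z) (auto simp: mult_le_iff_le_ldiv le_ldiv_iff_le_rdiv)

lemma star_neg_mult_le_iff_mult_neg:
  "star_le (smult (star_neg z) x) (star_neg y) \<longleftrightarrow> star_le (smult y (star_neg z)) (star_neg x)"
  by (cases x; cases y; cases z) (auto simp: mult_le_iff_le_ldiv le_ldiv_iff_le_rdiv)

end

theorem mainTheorem13:
  fixes mult ldiv rdiv :: "'a::lattice \<Rightarrow> 'a \<Rightarrow> 'a" and one :: 'a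
  assumes "rlu_groupoid mult ldiv rdiv one"
  shows "(is_lattice_order (star_le :: 'a star \<Rightarrow> 'a star \<Rightarrow> bool) \<and>
          (\<forall>x. star_mult mult ldiv rdiv (star_one one) x = x \<and>
               star_mult mult ldiv rdiv x (star_one one) = x) \<and>
          (\<forall>x y z. star_le x y \<longrightarrow>
               star_le (star_mult mult ldiv rdiv x z) (star_mult mult ldiv rdiv y z) \<and>
               star_le (star_mult mult ldiv rdiv z x) (star_mult mult ldiv rdiv z y)))
       \<and> (\<forall>x y z.
            (star_le (star_mult mult ldiv rdiv x y) z \<longleftrightarrow>
             star_le (star_mult mult ldiv rdiv (star_neg z) x) (star_neg y)) \<and>
            (star_le (star_mult mult ldiv rdiv (star_neg z) x) (star_neg y) \<longleftrightarrow>
             star_le (star_mult mult ldiv rdiv y (star_neg z)) (star_neg x)))"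
proof -
  interpret rlu mult ldiv rdiv one
    using assms by unfold_locales
  show ?thesis
    using is_lattice_order_star_le star_mult_one_left star_mult_one_right
      star_mult_mono_left star_mult_mono_right
      star_mult_le_iff_neg_left star_neg_mult_le_iff_mult_neg
    by blast
qed

end
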